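(* Let $\mathbb{S}$ be a metric space with its Borel $\sigma$-field, let $\{\mu_n\}_{n=1,2,\ldots}$ be a sequence of measures on $\mathbb{S}$ converging weakly to a finite measure $\mu$ on $\mathbb{S}$, and let $\{f_n\}_{n=1,2,\ldots}$ be a sequence of measurable $[-\infty,+\infty]$-valued functions on $\mathbb{S}$ such that $\{f_n^-\}_{n=1,2,\ldots}$ is asymptotically uniformly integrable with respect to $\{\mu_n\}_{n=1,2,\ldots}$. Then $$\int_{\mathbb{S}}\liminf_{n\to\infty,\,s'\to s} f_n(s')\,\mu(ds)\le\liminf_{n\to\infty}\int_{\mathbb{S}} f_n(s)\,\mu_n(ds).$$
   Context: $\mu_n$ converges weakly to $\mu$ means $\int f\,d\mu_n\to\int f\,d\mu$ for every bounded continuous $f:\mathbb{S}\to\mathbb{R}$. $f^-=-\min\{f,0\}$, $f^+=\max\{f,0\}$. For an extended-real function $f$ and measure $\nu$, $\int f\,d\nu:=\int f^+d\nu-\int f^-d\nu$, defined when $\min\{\int f^+d\nu,\int f^-d\nu\}<\infty$; all integrals appearing in the hypotheses and conclusion are assumed to be defined. $\liminf_{n\to\infty,s'\to s}f_n(s'):=\sup_{n\ge1,\delta>0}\inf_{m\ge n,\,s'\in B_\delta(s)}f_m(s')$, where $B_\delta(s)$ is the open ball of radius $\delta$ about $s$. A sequence $\{h_n\}$ is asymptotically uniformly integrable with respect to $\{\mu_n\}$ if $\lim_{K\to+\infty}\limsup_{n\to\infty}\int|h_n|\,\mathbf{1}\{|h_n|\ge K\}\,d\mu_n=0$. *)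

theory Defs
  imports "HOL-Analysis.Analysis"
begin

definition pos_part :: "('a \<Rightarrow> ereal) \<Rightarrow> 'a \<Rightarrow> ereal" where
  "pos_part f = (\<lambda>x. max (f x) 0)"

definition neg_part :: "('a \<Rightarrow> ereal) \<Rightarrow> 'a \<Rightarrow> ereal" where
  "neg_part f = (\<lambda>x. - min (f x) 0)"

definition pos_integral :: "'a measure \<Rightarrow> ('a \<Rightarrow> ereal) \<Rightarrow> ereal" where
  "pos_integral M f = enn2ereal (\<integral>\<^sup>+ x. e2ennreal (pos_part f x) \<partial>M)"

definition neg_integral :: "'a measure \<Rightarrow> ('a \<Rightarrow> ereal) \<Rightarrow> ereal" where
  "neg_integral M f = enn2ereal (\<integral>\<^sup>+ x. e2ennreal (neg_part f x) \<partial>M)"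

definition integral_defined :: "'a measure \<Rightarrow> ('a \<Rightarrow> ereal) \<Rightarrow> bool" where
  "integral_defined M f \<longleftrightarrow> min (pos_integral M f) (neg_integral M f) < \<infinity>"

definition ext_integral :: "'a measure \<Rightarrow> ('a \<Rightarrow> ereal) \<Rightarrow> ereal" where
  "ext_integral M f = pos_integral M f - neg_integral M f"

definition weak_conv :: "(nat \<Rightarrow> 'a::metric_space measure) \<Rightarrow> 'a measure \<Rightarrow> bool" where
  "weak_conv \<mu>s \<mu> \<longleftrightarrow>
     (\<forall>g :: 'a \<Rightarrow> real. continuous_on UNIV g \<and> bounded (range g) \<longrightarrow>
        (\<forall>n. integral_defined (\<mu>s n) (\<lambda>x. ereal (g x))) \<and>
        integral_defined \<mu> (\<lambda>x. ereal (g x)) \<and>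
        (\<lambda>n. ext_integral (\<mu>s n) (\<lambda>x. ereal (g x)))
           \<longlonglongrightarrow> ext_integral \<mu> (\<lambda>x. ereal (g x)))"

definition joint_liminf :: "(nat \<Rightarrow> 'a::metric_space \<Rightarrow> ereal) \<Rightarrow> 'a \<Rightarrow> ereal" where
  "joint_liminf f s = (SUP p \<in> {(n, \<delta>). \<delta> > (0::real)}.
      (INF q \<in> {(m, s'). m \<ge> fst p \<and> s' \<in> ball s (snd p)}. f (fst q) (snd q)))"

definition asymp_unif_integrable ::
    "(nat \<Rightarrow> 'a \<Rightarrow> ereal) \<Rightarrow> (nat \<Rightarrow> 'a measure) \<Rightarrow> bool" where
  "asymp_unif_integrable h \<mu>s \<longleftrightarrow>
     ((\<lambda>K::real. limsup (\<lambda>n. \<integral>\<^sup>+ x. e2ennreal \<bar>h n x\<bar> *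
          indicator {y. \<bar>h n y\<bar> \<ge> ereal K} x \<partial>(\<mu>s n))) \<longlongrightarrow> 0) at_top"

end

theory Submission
  imports Defs
begin

(* A lower semicontinuous h \<ge> 0 is the increasing limit of the bounded Lipschitz functions
   s \<mapsto> inf_y (min (h y) k + k d(s, y)), so weak convergence and monotone convergence give
   \<integral> h d\<mu> \<le> liminf \<integral> h d\<mu>_n. The joint liminf of f_n is the increasing limit over n of the
   lower semicontinuous envelopes inf {f_m(s') | m \<ge> n, s' near s}, each of which lies below
   f_m for m \<ge> n; this settles nonnegative f_n. In general one applies this to (f_n + K)^+:
   passing from f_n to (f_n + K)^+ costs at most K \<mu>_n(S) + \<integral> f_n^- 1{f_n^- \<ge> K} d\<mu>_n, the
   first term converges to the K \<mu>(S) gained on the limit side, and the second one is small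
   for large K by asymptotic uniform integrability. *)

definition lower_semicontinuous :: "('a::topological_space \<Rightarrow> 'b::linorder) \<Rightarrow> bool" where
  "lower_semicontinuous h \<longleftrightarrow> (\<forall>c. open {x. c < h x})"

lemma lower_semicontinuous_borel_measurable:
  fixes h :: "'a::topological_space \<Rightarrow> 'b::{linorder_topology, second_countable_topology}"
  assumes "lower_semicontinuous h"
  shows "h \<in> borel_measurable borel"
  using assms unfolding lower_semicontinuous_def by (intro borel_measurableI_greater) simp

(* Truncating h at k keeps the values finite, so enn2real does not send \<infinity> to 0. *)
definition lipschitz_minorant :: "('a::metric_space \<Rightarrow> ennreal) \<Rightarrow> nat \<Rightarrow> 'a \<Rightarrow> real" where
  "lipschitz_minorant h k s = (INF y. enn2real (min (h y) (of_nat k)) + real k * dist s y)"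

lemma
  fixes h :: "'a::metric_space \<Rightarrow> ennreal"
  shows lipschitz_minorant_le: "lipschitz_minorant h k s \<le> enn2real (min (h y) (of_nat k)) + real k * dist s y"
    and lipschitz_minorant_greatest:
      "(\<And>y. c \<le> enn2real (min (h y) (of_nat k)) + real k * dist s y) \<Longrightarrow> c \<le> lipschitz_minorant h k s"
  unfolding lipschitz_minorant_def
  by (auto intro!: cINF_lower cINF_greatest bdd_belowI2[where m=0])

lemma enn2real_min_of_nat_le: "enn2real (min h (of_nat k)) \<le> real k"
  using enn2real_mono[of "min h (of_nat k)" "of_nat k"] by (simp add: of_nat_less_top)

lemma lipschitz_minorant_nonneg: "0 \<le> lipschitz_minorant h k s"
  by (rule lipschitz_minorant_greatest) simp

lemma lipschitz_minorant_le_nat: "lipschitz_minorant h k s \<le> real k"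
  using lipschitz_minorant_le[of h k s s] enn2real_min_of_nat_le[of "h s" k] by simp

lemma lipschitz_minorant_lipschitz: "(real k)-lipschitz_on UNIV (lipschitz_minorant h k)"
proof -
  have shift: "lipschitz_minorant h k s \<le> lipschitz_minorant h k t + real k * dist s t" for s t
  proof -
    have "lipschitz_minorant h k s - real k * dist s t \<le> lipschitz_minorant h k t"
    proof (rule lipschitz_minorant_greatest)
      fix y
      have "dist s y \<le> dist s t + dist t y" by (rule dist_triangle)
      then have "real k * dist s y \<le> real k * dist s t + real k * dist t y"
        by (simp add: mult_left_mono flip: distrib_left)
      then show "lipschitz_minorant h k s - real k * dist s t
          \<le> enn2real (min (h y) (of_nat k)) + real k * dist t y"
        using lipschitz_minorant_le[of h k s y] by linarith
    qed
    then show ?thesis by simp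
  qed
  show ?thesis
  proof (rule lipschitz_onI)
    fix s t :: 'a
    show "dist (lipschitz_minorant h k s) (lipschitz_minorant h k t) \<le> real k * dist s t"
      using shift[of s t] shift[of t s] by (simp add: dist_real_def dist_commute abs_le_iff)
  qed simp
qed

lemma continuous_lipschitz_minorant: "continuous_on UNIV (lipschitz_minorant h k)"
  using lipschitz_minorant_lipschitz by (rule lipschitz_on_continuous_on)

lemma bounded_lipschitz_minorant: "bounded (range (lipschitz_minorant h k))"
  using lipschitz_minorant_nonneg[of h k] lipschitz_minorant_le_nat[of h k]
  by (intro boundedI[where B="real k"]) (force simp: abs_le_iff)

lemma lipschitz_minorant_le_fun: "ennreal (lipschitz_minorant h k s) \<le> h s"
proof -
  have "ennreal (lipschitz_minorant h k s) \<le> ennreal (enn2real (min (h s) (of_nat k)))"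
    using lipschitz_minorant_le[of h k s s] by (intro ennreal_leI) simp
  also have "\<dots> = min (h s) (of_nat k)"
    by (simp add: min.strict_coboundedI2 of_nat_less_top)
  finally show ?thesis by simp
qed

lemma incseq_lipschitz_minorant: "incseq (\<lambda>k s. ennreal (lipschitz_minorant h k s))"
proof (intro incseq_SucI le_funI ennreal_leI lipschitz_minorant_greatest)
  fix k s y
  have "enn2real (min (h y) (of_nat k)) \<le> enn2real (min (h y) (of_nat (Suc k)))"
    by (rule enn2real_mono) (auto simp: min.coboundedI2 min.strict_coboundedI2 of_nat_less_top)
  moreover have "real k * dist s y \<le> real (Suc k) * dist s y"
    by (simp add: mult_right_mono)
  ultimately show "lipschitz_minorant h k s \<le> enn2real (min (h y) (of_nat (Suc k))) + real (Suc k) * dist s y"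
    using lipschitz_minorant_le[of h k s y] by linarith
qed

lemma SUP_lipschitz_minorant:
  assumes "lower_semicontinuous h"
  shows "(SUP k. ennreal (lipschitz_minorant h k s)) = h s"
proof (rule antisym)
  show "(SUP k. ennreal (lipschitz_minorant h k s)) \<le> h s"
    by (rule SUP_least) (rule lipschitz_minorant_le_fun)
  show "h s \<le> (SUP k. ennreal (lipschitz_minorant h k s))"
  proof (rule dense_le)
    fix c assume "c < h s"
    then obtain r where r: "c = ennreal r" "0 \<le> r"
      by (cases c) auto
    have "open {x. c < h x}"
      using assms unfolding lower_semicontinuous_def ..
    then obtain \<delta> where "\<delta> > 0" and \<delta>: "\<And>y. y \<in> ball s \<delta> \<Longrightarrow> c < h y"
      using \<open>c < h s\<close> by (force simp: open_contains_ball)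
    \<comment> \<open>\<open>k\<close> is large enough that both \<open>min (h y) k\<close> on the ball and the penalty \<open>k \<delta>\<close> off it exceed \<open>r\<close>\<close>
    define k where "k = nat \<lceil>r / \<delta>\<rceil> + nat \<lceil>r\<rceil>"
    have "r \<le> real k" unfolding k_def by linarith
    have "r / \<delta> \<le> real k" unfolding k_def by linarith
    then have "r \<le> real k * \<delta>" using \<open>\<delta> > 0\<close> by (simp add: divide_le_eq)
    have "r \<le> lipschitz_minorant h k s"
    proof (rule lipschitz_minorant_greatest)
      fix y
      show "r \<le> enn2real (min (h y) (of_nat k)) + real k * dist s y"
      proof (cases "y \<in> ball s \<delta>")
        case True
        then have "c \<le> min (h y) (of_nat k)"
          using \<delta>[OF True] \<open>r \<le> real k\<close> r by (simp add: ennreal_of_nat_eq_real_of_nat ennreal_leI)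
        then have "r \<le> enn2real (min (h y) (of_nat k))"
          using r enn2real_mono[of c "min (h y) (of_nat k)"] by (simp add: min.strict_coboundedI2 of_nat_less_top)
        then show ?thesis by (simp add: add_increasing2)
      next
        case False
        then have "real k * \<delta> \<le> real k * dist s y" by (simp add: mult_left_mono)
        with \<open>r \<le> real k * \<delta>\<close> show ?thesis
          using enn2real_nonneg[of "min (h y) (of_nat k)"] by linarith
      qed
    qed
    then have "c \<le> ennreal (lipschitz_minorant h k s)" using r by (simp add: ennreal_leI)
    also have "\<dots> \<le> (SUP k. ennreal (lipschitz_minorant h k s))" by (rule SUP_upper) simp
    finally show "c \<le> (SUP k. ennreal (lipschitz_minorant h k s))" .
  qed
qed

lemma ext_integral_nonneg:
  assumes "\<And>x. 0 \<le> g x"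
  shows "ext_integral M (\<lambda>x. ereal (g x)) = enn2ereal (\<integral>\<^sup>+ x. ennreal (g x) \<partial>M)"
proof -
  have "pos_part (\<lambda>x. ereal (g x)) = (\<lambda>x. ereal (g x))" "neg_part (\<lambda>x. ereal (g x)) = (\<lambda>x. 0)"
    using assms by (simp_all add: pos_part_def neg_part_def fun_eq_iff)
  then show ?thesis
    by (simp add: ext_integral_def pos_integral_def neg_integral_def e2ennreal_neg zero_ennreal.rep_eq)
qed

lemma weak_conv_nn_integral:
  assumes "weak_conv \<mu>s \<mu>" "continuous_on UNIV g" "bounded (range g)" "\<And>x. 0 \<le> g x"
  shows "(\<lambda>n. \<integral>\<^sup>+ x. ennreal (g x) \<partial>\<mu>s n) \<longlonglongrightarrow> (\<integral>\<^sup>+ x. ennreal (g x) \<partial>\<mu>)"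
proof -
  have "(\<lambda>n. ext_integral (\<mu>s n) (\<lambda>x. ereal (g x))) \<longlonglongrightarrow> ext_integral \<mu> (\<lambda>x. ereal (g x))"
    using assms(1-3) unfolding weak_conv_def by blast
  then show ?thesis
    by (simp add: ext_integral_nonneg assms(4))
qed

lemma weak_conv_emeasure_space:
  assumes "weak_conv \<mu>s \<mu>"
  shows "(\<lambda>n. emeasure (\<mu>s n) (space (\<mu>s n))) \<longlonglongrightarrow> emeasure \<mu> (space \<mu>)"
  using weak_conv_nn_integral[OF assms, of "\<lambda>_. 1"] by (auto simp: bounded_iff)

lemma nn_integral_le_liminf_weak_conv:
  fixes h :: "'a::metric_space \<Rightarrow> ennreal"
  assumes "lower_semicontinuous h" "sets \<mu> = sets borel" "weak_conv \<mu>s \<mu>"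
  shows "(\<integral>\<^sup>+ x. h x \<partial>\<mu>) \<le> liminf (\<lambda>n. \<integral>\<^sup>+ x. h x \<partial>\<mu>s n)"
proof -
  have "lipschitz_minorant h k \<in> borel_measurable \<mu>" for k
    using borel_measurable_continuous_onI[OF continuous_lipschitz_minorant]
    by (simp add: measurable_cong_sets[OF assms(2) refl])
  then have meas: "(\<lambda>x. ennreal (lipschitz_minorant h k x)) \<in> borel_measurable \<mu>" for k
    by measurable
  have "(\<integral>\<^sup>+ x. h x \<partial>\<mu>) = (\<integral>\<^sup>+ x. (SUP k. ennreal (lipschitz_minorant h k x)) \<partial>\<mu>)"
    by (simp add: SUP_lipschitz_minorant[OF assms(1)])
  also have "\<dots> = (SUP k. \<integral>\<^sup>+ x. ennreal (lipschitz_minorant h k x) \<partial>\<mu>)"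
    by (rule nn_integral_monotone_convergence_SUP[OF incseq_lipschitz_minorant meas])
  also have "\<dots> \<le> liminf (\<lambda>n. \<integral>\<^sup>+ x. h x \<partial>\<mu>s n)"
  proof (rule SUP_least)
    fix k
    have "(\<integral>\<^sup>+ x. ennreal (lipschitz_minorant h k x) \<partial>\<mu>)
        = liminf (\<lambda>n. \<integral>\<^sup>+ x. ennreal (lipschitz_minorant h k x) \<partial>\<mu>s n)"
      by (intro lim_imp_Liminf[symmetric] weak_conv_nn_integral assms(3) continuous_lipschitz_minorant
          bounded_lipschitz_minorant lipschitz_minorant_nonneg) simp
    also have "\<dots> \<le> liminf (\<lambda>n. \<integral>\<^sup>+ x. h x \<partial>\<mu>s n)"
      by (intro Liminf_mono always_eventually allI nn_integral_mono lipschitz_minorant_le_fun)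
    finally show "(\<integral>\<^sup>+ x. ennreal (lipschitz_minorant h k x) \<partial>\<mu>) \<le> liminf (\<lambda>n. \<integral>\<^sup>+ x. h x \<partial>\<mu>s n)" .
  qed
  finally show ?thesis .
qed

definition tail_envelope :: "(nat \<Rightarrow> 'a::metric_space \<Rightarrow> 'b::complete_lattice) \<Rightarrow> nat \<Rightarrow> 'a \<Rightarrow> 'b" where
  "tail_envelope f n s = (SUP \<delta>\<in>{0<..}. INF m\<in>{n..}. INF y\<in>ball s \<delta>. f m y)"

lemma joint_liminf_eq_SUP_tail_envelope: "joint_liminf f s = (SUP n. tail_envelope f n s)"
  unfolding joint_liminf_def tail_envelope_def INF_Sigma
  by (rule antisym) (auto intro!: SUP_least SUP_upper2 INF_superset_mono)

lemma tail_envelope_le: "n \<le> m \<Longrightarrow> tail_envelope f n s \<le> f m s"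
  unfolding tail_envelope_def by (auto intro!: SUP_least INF_lower2)

lemma incseq_tail_envelope: "incseq (\<lambda>n. tail_envelope f n)"
  unfolding tail_envelope_def by (auto intro!: incseq_SucI le_funI SUP_mono' INF_superset_mono)

lemma lower_semicontinuous_tail_envelope:
  fixes f :: "nat \<Rightarrow> 'a::metric_space \<Rightarrow> 'b::complete_linorder"
  shows "lower_semicontinuous (tail_envelope f n)"
  unfolding lower_semicontinuous_def open_contains_ball
proof (intro allI ballI)
  fix c s assume "s \<in> {x. c < tail_envelope f n x}"
  then obtain \<delta> where "\<delta> > 0" and c: "c < (INF m\<in>{n..}. INF y\<in>ball s \<delta>. f m y)"
    by (auto simp: tail_envelope_def less_SUP_iff)
  have "c < tail_envelope f n t" if "t \<in> ball s \<delta>" for t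
  proof -
    have "ball t (\<delta> - dist s t) \<subseteq> ball s \<delta>"
    proof
      fix y assume "y \<in> ball t (\<delta> - dist s t)"
      then show "y \<in> ball s \<delta>" using dist_triangle[of s y t] by simp
    qed
    then have "(INF m\<in>{n..}. INF y\<in>ball s \<delta>. f m y) \<le> (INF m\<in>{n..}. INF y\<in>ball t (\<delta> - dist s t). f m y)"
      by (intro INF_mono' INF_superset_mono) auto
    also have "\<dots> \<le> tail_envelope f n t"
      unfolding tail_envelope_def using that by (intro SUP_upper) auto
    finally show ?thesis using c by simp
  qed
  with \<open>\<delta> > 0\<close> show "\<exists>\<delta>>0. ball s \<delta> \<subseteq> {x. c < tail_envelope f n x}"
    by blast
qed

lemma mono_continuous_SUP:
  fixes \<phi> :: "'b::{complete_linorder, linorder_topology} \<Rightarrow> 'c::{complete_linorder, linorder_topology}"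
  assumes "mono \<phi>" "continuous_on UNIV \<phi>" "I \<noteq> {}"
  shows "\<phi> (SUP i\<in>I. x i) = (SUP i\<in>I. \<phi> (x i))"
  using continuous_at_Sup_mono[OF assms(1), of "x ` I"] assms(2,3)
  by (simp add: image_comp continuous_on_eq_continuous_within continuous_at_imp_continuous_at_within)

lemma mono_continuous_joint_liminf_le:
  fixes \<phi> :: "ereal \<Rightarrow> 'c::{complete_linorder, linorder_topology}"
  assumes "mono \<phi>" "continuous_on UNIV \<phi>"
  shows "\<phi> (joint_liminf f s) \<le> (SUP n. tail_envelope (\<lambda>m y. \<phi> (f m y)) n s)"
proof -
  have "\<phi> (tail_envelope f n s) = (SUP \<delta>\<in>{0<..}. \<phi> (INF m\<in>{n..}. INF y\<in>ball s \<delta>. f m y))" for n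
    unfolding tail_envelope_def by (rule mono_continuous_SUP[OF assms]) simp
  also have "\<dots> n \<le> tail_envelope (\<lambda>m y. \<phi> (f m y)) n s" for n
    unfolding tail_envelope_def
    by (intro SUP_mono' order_trans[OF mono_INF[OF assms(1)]] INF_mono' mono_INF[OF assms(1)])
  finally have "\<phi> (tail_envelope f n s) \<le> tail_envelope (\<lambda>m y. \<phi> (f m y)) n s" for n .
  then show ?thesis
    unfolding joint_liminf_eq_SUP_tail_envelope mono_continuous_SUP[OF assms UNIV_not_empty]
    by (intro SUP_mono') auto
qed

lemma nn_integral_SUP_tail_envelope_le_liminf:
  fixes v :: "nat \<Rightarrow> 'a::metric_space \<Rightarrow> ennreal"
  assumes "sets \<mu> = sets borel" "weak_conv \<mu>s \<mu>"
  shows "(\<integral>\<^sup>+ x. (SUP n. tail_envelope v n x) \<partial>\<mu>) \<le> liminf (\<lambda>n. \<integral>\<^sup>+ x. v n x \<partial>\<mu>s n)"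
proof -
  have meas: "tail_envelope v n \<in> borel_measurable \<mu>" for n
    using lower_semicontinuous_borel_measurable[OF lower_semicontinuous_tail_envelope]
    by (simp add: measurable_cong_sets[OF assms(1) refl])
  have "(\<integral>\<^sup>+ x. (SUP n. tail_envelope v n x) \<partial>\<mu>) = (SUP n. \<integral>\<^sup>+ x. tail_envelope v n x \<partial>\<mu>)"
    by (rule nn_integral_monotone_convergence_SUP[OF incseq_tail_envelope meas])
  also have "\<dots> \<le> liminf (\<lambda>m. \<integral>\<^sup>+ x. v m x \<partial>\<mu>s m)"
  proof (rule SUP_least)
    fix n
    have "(\<integral>\<^sup>+ x. tail_envelope v n x \<partial>\<mu>) \<le> liminf (\<lambda>m. \<integral>\<^sup>+ x. tail_envelope v n x \<partial>\<mu>s m)"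
      by (rule nn_integral_le_liminf_weak_conv[OF lower_semicontinuous_tail_envelope assms])
    also have "\<dots> \<le> liminf (\<lambda>m. \<integral>\<^sup>+ x. v m x \<partial>\<mu>s m)"
      by (intro Liminf_mono eventually_sequentiallyI[of n] nn_integral_mono tail_envelope_le)
    finally show "(\<integral>\<^sup>+ x. tail_envelope v n x \<partial>\<mu>) \<le> liminf (\<lambda>m. \<integral>\<^sup>+ x. v m x \<partial>\<mu>s m)" .
  qed
  finally show ?thesis .
qed

lemma borel_measurable_joint_liminf: "joint_liminf f \<in> borel_measurable borel"
  unfolding joint_liminf_eq_SUP_tail_envelope[abs_def]
  using lower_semicontinuous_borel_measurable[OF lower_semicontinuous_tail_envelope] by measurable

lemma e2ennreal_shift_plus_neg_part_le:
  assumes "0 \<le> K"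
  shows "e2ennreal (f x + ereal K) + e2ennreal (neg_part f x)
    \<le> e2ennreal (pos_part f x) + ennreal K
        + e2ennreal \<bar>neg_part f x\<bar> * indicator {y. \<bar>neg_part f y\<bar> \<ge> ereal K} x"
proof (cases "f x")
  case (real r)
  with assms show ?thesis
    by (cases "0 \<le> r"; cases "0 \<le> r + K")
       (auto simp: pos_part_def neg_part_def ennreal_plus[symmetric] min_def max_def ennreal_neg
         e2ennreal_neg add_increasing ennreal_leI simp del: ennreal_plus)
qed (auto simp: pos_part_def neg_part_def)

lemma e2ennreal_pos_part_plus_le_shift:
  assumes "0 \<le> K"
  shows "e2ennreal (pos_part f x) + ennreal K \<le> e2ennreal (f x + ereal K) + e2ennreal (neg_part f x)"
proof (cases "f x")
  case (real r)
  with assms show ?thesis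
    by (cases "0 \<le> r"; cases "0 \<le> r + K")
       (auto simp: pos_part_def neg_part_def ennreal_plus[symmetric] min_def max_def ennreal_neg
         e2ennreal_neg ennreal_leI simp del: ennreal_plus)
qed (auto simp: pos_part_def neg_part_def)

definition large_values_integral :: "'a measure \<Rightarrow> ('a \<Rightarrow> ereal) \<Rightarrow> real \<Rightarrow> ennreal" where
  "large_values_integral M h K = (\<integral>\<^sup>+ x. e2ennreal \<bar>h x\<bar> * indicator {y. \<bar>h y\<bar> \<ge> ereal K} x \<partial>M)"

(* No finiteness hypothesis is needed: in ereal, \<infinity> + -\<infinity> = \<infinity>. *)
lemma nn_integral_shift_le_ext_integral:
  assumes [measurable]: "f \<in> borel_measurable M" and "0 \<le> K" and "integral_defined M f"
  shows "enn2ereal (\<integral>\<^sup>+ x. e2ennreal (f x + ereal K) \<partial>M)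
    \<le> ext_integral M f + enn2ereal (ennreal K * emeasure M (space M))
        + enn2ereal (large_values_integral M (neg_part f) K)"
proof -
  define P where "P = (\<integral>\<^sup>+ x. e2ennreal (pos_part f x) \<partial>M)"
  define N where "N = (\<integral>\<^sup>+ x. e2ennreal (neg_part f x) \<partial>M)"
  define U where "U = (\<integral>\<^sup>+ x. e2ennreal (f x + ereal K) \<partial>M)"
  define C where "C = ennreal K * emeasure M (space M)"
  define A where "A = large_values_integral M (neg_part f) K"
  have "U + N = (\<integral>\<^sup>+ x. e2ennreal (f x + ereal K) + e2ennreal (neg_part f x) \<partial>M)"
    unfolding U_def N_def neg_part_def by (intro nn_integral_add[symmetric]) measurable
  also have "\<dots> \<le> (\<integral>\<^sup>+ x. e2ennreal (pos_part f x) + ennreal K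
      + e2ennreal \<bar>neg_part f x\<bar> * indicator {y. \<bar>neg_part f y\<bar> \<ge> ereal K} x \<partial>M)"
    by (intro nn_integral_mono e2ennreal_shift_plus_neg_part_le \<open>0 \<le> K\<close>)
  also have "\<dots> = P + C + A"
    unfolding P_def C_def A_def large_values_integral_def pos_part_def neg_part_def
    by (subst nn_integral_add; simp add: nn_integral_add)
  finally have "U + N \<le> P + C + A" .
  moreover have "min (enn2ereal P) (enn2ereal N) < \<infinity>"
    using \<open>integral_defined M f\<close> by (simp add: integral_defined_def pos_integral_def neg_integral_def P_def N_def)
  ultimately have "enn2ereal U \<le> enn2ereal P - enn2ereal N + enn2ereal C + enn2ereal A"
    by (cases P; cases N; cases U; cases C; cases A)
       (auto simp: ennreal_plus[symmetric] top_unique simp del: ennreal_plus)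
  then show ?thesis
    by (simp add: U_def P_def N_def C_def A_def ext_integral_def pos_integral_def neg_integral_def)
qed

lemma ext_integral_plus_le_nn_integral_shift:
  assumes [measurable]: "f \<in> borel_measurable M" and "0 \<le> K" and "integral_defined M f"
    and "emeasure M (space M) < \<infinity>"
  shows "ext_integral M f + enn2ereal (ennreal K * emeasure M (space M))
    \<le> enn2ereal (\<integral>\<^sup>+ x. e2ennreal (f x + ereal K) \<partial>M)"
proof -
  define P where "P = (\<integral>\<^sup>+ x. e2ennreal (pos_part f x) \<partial>M)"
  define N where "N = (\<integral>\<^sup>+ x. e2ennreal (neg_part f x) \<partial>M)"
  define W where "W = (\<integral>\<^sup>+ x. e2ennreal (f x + ereal K) \<partial>M)"
  define C where "C = ennreal K * emeasure M (space M)"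
  have "P + C = (\<integral>\<^sup>+ x. e2ennreal (pos_part f x) + ennreal K \<partial>M)"
    unfolding P_def C_def pos_part_def by (simp add: nn_integral_add)
  also have "\<dots> \<le> (\<integral>\<^sup>+ x. e2ennreal (f x + ereal K) + e2ennreal (neg_part f x) \<partial>M)"
    by (intro nn_integral_mono e2ennreal_pos_part_plus_le_shift \<open>0 \<le> K\<close>)
  also have "\<dots> = W + N"
    unfolding W_def N_def neg_part_def by (intro nn_integral_add) measurable
  finally have "P + C \<le> W + N" .
  moreover have "C < \<infinity>"
    using \<open>emeasure M (space M) < \<infinity>\<close> by (simp add: C_def ennreal_mult_less_top)
  moreover have "min (enn2ereal P) (enn2ereal N) < \<infinity>"
    using \<open>integral_defined M f\<close> by (simp add: integral_defined_def pos_integral_def neg_integral_def P_def N_def)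
  ultimately have "enn2ereal P - enn2ereal N + enn2ereal C \<le> enn2ereal W"
    by (cases P; cases N; cases W; cases C)
       (auto simp: ennreal_plus[symmetric] top_unique simp del: ennreal_plus)
  then show ?thesis
    by (simp add: W_def P_def N_def C_def ext_integral_def pos_integral_def neg_integral_def)
qed

lemma continuous_on_e2ennreal_shift: "continuous_on UNIV (\<lambda>x. e2ennreal (x + ereal K))"
proof -
  have "continuous_on UNIV (\<lambda>x. x + ereal K)"
    unfolding continuous_on_def by (auto intro!: tendsto_add_ereal_general)
  then show ?thesis
    by (rule continuous_on_compose2[OF continuous_on_e2ennreal]) auto
qed

lemma mono_e2ennreal_shift: "mono (\<lambda>x. e2ennreal (x + ereal K))"
  by (intro monoI e2ennreal_mono add_right_mono)

lemma ereal_add_cancel_le: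
  fixes a b c d :: ereal
  assumes "a + c \<le> b + (c + d)" "\<bar>c\<bar> \<noteq> \<infinity>"
  shows "a \<le> b + d"
  using assms by (cases a; cases b; cases c; cases d) auto

lemma mono_enn2ereal: "mono enn2ereal"
  by (simp add: mono_def less_eq_ennreal.rep_eq)

lemma ext_integral_joint_liminf_plus_le_liminf_shift:
  fixes \<mu>s :: "nat \<Rightarrow> 'a::metric_space measure" and f :: "nat \<Rightarrow> 'a \<Rightarrow> ereal"
  assumes sets_\<mu>: "sets \<mu> = sets borel" and "emeasure \<mu> (space \<mu>) < \<infinity>" and weak: "weak_conv \<mu>s \<mu>"
    and "integral_defined \<mu> (joint_liminf f)" and "0 \<le> K"
  shows "ext_integral \<mu> (joint_liminf f) + enn2ereal (ennreal K * emeasure \<mu> (space \<mu>))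
    \<le> liminf (\<lambda>n. enn2ereal (\<integral>\<^sup>+ x. e2ennreal (f n x + ereal K) \<partial>\<mu>s n))"
proof -
  define v where "v n x = e2ennreal (f n x + ereal K)" for n x
  have "joint_liminf f \<in> borel_measurable \<mu>"
    using borel_measurable_joint_liminf by (simp add: measurable_cong_sets[OF sets_\<mu> refl])
  then have "ext_integral \<mu> (joint_liminf f) + enn2ereal (ennreal K * emeasure \<mu> (space \<mu>))
      \<le> enn2ereal (\<integral>\<^sup>+ x. e2ennreal (joint_liminf f x + ereal K) \<partial>\<mu>)"
    by (rule ext_integral_plus_le_nn_integral_shift) fact+
  also have "\<dots> \<le> enn2ereal (\<integral>\<^sup>+ x. (SUP n. tail_envelope v n x) \<partial>\<mu>)"
    unfolding v_def less_eq_ennreal.rep_eq[symmetric]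
    by (intro nn_integral_mono mono_continuous_joint_liminf_le mono_e2ennreal_shift
        continuous_on_e2ennreal_shift)
  also have "\<dots> \<le> enn2ereal (liminf (\<lambda>n. \<integral>\<^sup>+ x. v n x \<partial>\<mu>s n))"
    unfolding less_eq_ennreal.rep_eq[symmetric]
    by (rule nn_integral_SUP_tail_envelope_le_liminf[OF sets_\<mu> weak])
  also have "\<dots> = liminf (\<lambda>n. enn2ereal (\<integral>\<^sup>+ x. v n x \<partial>\<mu>s n))"
    by (rule Liminf_compose_continuous_mono[OF continuous_on_enn2ereal mono_enn2ereal, symmetric]) simp
  finally show ?thesis
    unfolding v_def .
qed

lemma ext_integral_joint_liminf_le_liminf_plus_large_values:
  fixes \<mu>s :: "nat \<Rightarrow> 'a::metric_space measure" and f :: "nat \<Rightarrow> 'a \<Rightarrow> ereal"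
  assumes sets_\<mu>s: "\<And>n. sets (\<mu>s n) = sets borel" and "sets \<mu> = sets borel"
    and "finite_measure \<mu>" and weak: "weak_conv \<mu>s \<mu>"
    and meas: "\<And>n. f n \<in> borel_measurable borel"
    and def_n: "\<And>n. integral_defined (\<mu>s n) (f n)" and "integral_defined \<mu> (joint_liminf f)"
    and "0 \<le> K"
  shows "ext_integral \<mu> (joint_liminf f)
    \<le> liminf (\<lambda>n. ext_integral (\<mu>s n) (f n))
        + enn2ereal (limsup (\<lambda>n. large_values_integral (\<mu>s n) (neg_part (f n)) K))"
proof -
  define c where "c = enn2ereal (ennreal K * emeasure \<mu> (space \<mu>))"
  define E where "E n = enn2ereal (ennreal K * emeasure (\<mu>s n) (space (\<mu>s n)))" for n
  define A where "A n = large_values_integral (\<mu>s n) (neg_part (f n)) K" for n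
  have "emeasure \<mu> (space \<mu>) < \<infinity>"
    using finite_measure.emeasure_finite[OF \<open>finite_measure \<mu>\<close>] by (simp add: less_top)
  then have c_finite: "\<bar>c\<bar> \<noteq> \<infinity>"
    by (simp add: c_def ennreal_mult_eq_top_iff less_top)
  have "E \<longlonglongrightarrow> c"
    unfolding E_def c_def tendsto_enn2ereal_iff
    by (intro ennreal_tendsto_cmult weak_conv_emeasure_space weak) simp
  have "ext_integral \<mu> (joint_liminf f) + c
      \<le> liminf (\<lambda>n. enn2ereal (\<integral>\<^sup>+ x. e2ennreal (f n x + ereal K) \<partial>\<mu>s n))"
    unfolding c_def by (rule ext_integral_joint_liminf_plus_le_liminf_shift) fact+
  also have "\<dots> \<le> liminf (\<lambda>n. ext_integral (\<mu>s n) (f n) + (E n + enn2ereal (A n)))"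
  proof (intro Liminf_mono always_eventually allI)
    fix n
    have "f n \<in> borel_measurable (\<mu>s n)"
      using meas by (simp add: measurable_cong_sets[OF sets_\<mu>s refl])
    then show "enn2ereal (\<integral>\<^sup>+ x. e2ennreal (f n x + ereal K) \<partial>\<mu>s n)
        \<le> ext_integral (\<mu>s n) (f n) + (E n + enn2ereal (A n))"
      unfolding E_def A_def add.assoc[symmetric]
      by (rule nn_integral_shift_le_ext_integral[OF _ \<open>0 \<le> K\<close> def_n])
  qed
  also have "\<dots> \<le> liminf (\<lambda>n. ext_integral (\<mu>s n) (f n)) + limsup (\<lambda>n. E n + enn2ereal (A n))"
    by (rule ereal_liminf_limsup_add)
  also have "limsup (\<lambda>n. E n + enn2ereal (A n)) = c + enn2ereal (limsup A)"
    using ereal_limsup_lim_add[OF \<open>E \<longlonglongrightarrow> c\<close> c_finite]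
      Limsup_compose_continuous_mono[OF continuous_on_enn2ereal mono_enn2ereal, of sequentially A]
    by simp
  finally show ?thesis
    unfolding A_def using c_finite by (rule ereal_add_cancel_le)
qed

theorem theorem2p4:
  fixes \<mu>s :: "nat \<Rightarrow> 'a::metric_space measure"
    and \<mu> :: "'a measure"
    and f :: "nat \<Rightarrow> 'a \<Rightarrow> ereal"
  assumes sets_\<mu>s: "\<And>n. sets (\<mu>s n) = sets borel"
    and sets_\<mu>: "sets \<mu> = sets borel"
    and fin: "finite_measure \<mu>"
    and weak: "weak_conv \<mu>s \<mu>"
    and meas: "\<And>n. f n \<in> borel_measurable borel"
    and aui: "asymp_unif_integrable (\<lambda>n. neg_part (f n)) \<mu>s"
    and def_n: "\<And>n. integral_defined (\<mu>s n) (f n)"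
    and def_lim: "integral_defined \<mu> (joint_liminf f)"
  shows "ext_integral \<mu> (joint_liminf f) \<le> liminf (\<lambda>n. ext_integral (\<mu>s n) (f n))"
proof (rule ereal_le_epsilon2)
  fix e :: real assume "0 < e"
  have "((\<lambda>K. limsup (\<lambda>n. large_values_integral (\<mu>s n) (neg_part (f n)) K)) \<longlongrightarrow> 0) at_top"
    using aui unfolding asymp_unif_integrable_def large_values_integral_def .
  then have "\<forall>\<^sub>F K in at_top. 0 \<le> K \<and>
      limsup (\<lambda>n. large_values_integral (\<mu>s n) (neg_part (f n)) K) < ennreal e"
    using \<open>0 < e\<close> by (intro eventually_conj eventually_ge_at_top order_tendstoD(2)) auto
  then obtain K where "0 \<le> K"
    and small: "limsup (\<lambda>n. large_values_integral (\<mu>s n) (neg_part (f n)) K) < ennreal e"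
    unfolding eventually_at_top_linorder by blast
  have "ext_integral \<mu> (joint_liminf f)
      \<le> liminf (\<lambda>n. ext_integral (\<mu>s n) (f n))
          + enn2ereal (limsup (\<lambda>n. large_values_integral (\<mu>s n) (neg_part (f n)) K))"
    by (rule ext_integral_joint_liminf_le_liminf_plus_large_values) fact+
  also have "\<dots> \<le> liminf (\<lambda>n. ext_integral (\<mu>s n) (f n)) + ereal e"
    using less_imp_le[OF small, unfolded less_eq_ennreal.rep_eq] \<open>0 < e\<close>
    by (intro add_left_mono) simp
  finally show "ext_integral \<mu> (joint_liminf f) \<le> liminf (\<lambda>n. ext_integral (\<mu>s n) (f n)) + ereal e" .
qed

end
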